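(* Let $A:\mathbb{R}^n\to\mathbb{R}^m$ be a bounded linear operator, let $u^\dagger\in\mathbb{R}^n$ with $v:=Au^\dagger$, let $\wp>0$ with $\|u^\dagger-\Psi(v)\|\le\wp$. Let $\{v^\delta\}_{\delta>0}$ be noisy data with $\|v^\delta-v\|\le\delta$, and assume $\|\Psi(v^\delta)-\Psi(v)\|\to0$ as $\delta\to0$. Assume $C:=\eta-\frac{\eta_1}{\tau}-\nu_0(\wp+\nu_1)-\eta_0\eta_1>0$. Let $k_\delta$ be the discrepancy stopping index of the IRMGL+$\Psi$ iteration with noisy data $v^\delta$. Then there exists a solution $u^\dagger$ of $Au=v$ such that $$\lim_{\delta\to0}\|u_{k_\delta}^\delta-u^\dagger\|=0.$$
   Context: All norms are Euclidean, $A^*=A^\top$. Vectors $u\in\mathbb{R}^n$ are images: $n=pq$, pixel set $S=\{(i,j):1\le i\le p,1\le j\le q\}$, $u$ identified with $u:S\to\mathbb{R}$. Graph Laplacian built from $u$: fix $R>0$, $\sigma>0$, a distance $\eth$ on $S$; $g(a,b)=1$ if $0<\eth(a,b)\le R$, else $0$; $h_u(a,b)=\exp(-|u(a)-u(b)|^2/\sigma)$; $w_u=g\,h_u$; $W_u=[w_u(a,b)]$, $D_u=\mathrm{diag}(\sum_b w_u(a,b))$, $\Delta_u=D_u-W_u$. Noisy iteration: for a map $\Psi:\mathbb{R}^m\to\mathbb{R}^n$, $u_0^\delta=\Psi(v^\delta)$, $u_{k+1}^\delta=u_k^\delta-\alpha_k^\delta A^*(Au_k^\delta-v^\delta)-\beta_k^\delta\Delta_{u_k^\delta}u_k^\delta$,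 with constants $\eta_0,\eta_1,\nu_0,\nu_1,\nu_2>0$, $\alpha_k^\delta=\min\{\eta_0\|Au_k^\delta-v^\delta\|^2/\|A^*(Au_k^\delta-v^\delta)\|^2,\eta_1\}$ ($=\eta_1$ if the denominator vanishes), $\beta_k^\delta=\min\{\nu_0\|Au_k^\delta-v^\delta\|^2/\|\Delta_{u_k^\delta}u_k^\delta\|,\nu_1/\|\Delta_{u_k^\delta}u_k^\delta\|,\nu_2\}$ if $\Delta_{u_k^\delta}u_k^\delta\ne0$, else $0$. $\eta$ is a fixed constant with $0<\eta\le\min\{\eta_0/\|A\|^2,\eta_1\}$. With fixed $\tau>1$, $k_\delta=\min\{k\ge0:\|Au_k^\delta-v^\delta\|\le\tau\delta\}$. *)

theory Defs
  imports "HOL-Analysis.Analysis"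
begin

text \<open>Images are vectors indexed by the pixel set S = 'p \<times> 'q (two finite types,
  p = CARD('p), q = CARD('q)).  The linear operator A is a
  matrix, its adjoint is transpose A.\<close>

definition gl_weight ::
  "('s \<Rightarrow> 's \<Rightarrow> real) \<Rightarrow> real \<Rightarrow> real \<Rightarrow> real^'s \<Rightarrow> 's \<Rightarrow> 's \<Rightarrow> real" where
  "gl_weight eth R sig u a b =
     (if 0 < eth a b \<and> eth a b \<le> R then 1 else 0) * exp (- (\<bar>u $ a - u $ b\<bar>^2) / sig)"

definition gl_W :: "('s::finite \<Rightarrow> 's \<Rightarrow> real) \<Rightarrow> real \<Rightarrow> real \<Rightarrow> real^'s \<Rightarrow> real^'s^'s" where
  "gl_W eth R sig u = (\<chi> a b. gl_weight eth R sig u a b)"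

definition gl_D :: "('s::finite \<Rightarrow> 's \<Rightarrow> real) \<Rightarrow> real \<Rightarrow> real \<Rightarrow> real^'s \<Rightarrow> real^'s^'s" where
  "gl_D eth R sig u = (\<chi> a b. if a = b then (\<Sum>c\<in>UNIV. gl_weight eth R sig u a c) else 0)"

definition gl_Lap :: "('s::finite \<Rightarrow> 's \<Rightarrow> real) \<Rightarrow> real \<Rightarrow> real \<Rightarrow> real^'s \<Rightarrow> real^'s^'s" where
  "gl_Lap eth R sig u = gl_D eth R sig u - gl_W eth R sig u"

definition irmgl_alpha :: "real^'n::finite^'m::finite \<Rightarrow> real \<Rightarrow> real \<Rightarrow> real^'m \<Rightarrow> real^'n \<Rightarrow> real" where
  "irmgl_alpha A eta0 eta1 vd u =
     (let r = A *v u - vd; g = transpose A *v r in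
      if norm g = 0 then eta1 else min (eta0 * (norm r)^2 / (norm g)^2) eta1)"

definition irmgl_beta ::
  "real^('s::finite)^'m::finite \<Rightarrow> ('s \<Rightarrow> 's \<Rightarrow> real) \<Rightarrow> real \<Rightarrow> real \<Rightarrow> real \<Rightarrow> real \<Rightarrow> real
     \<Rightarrow> real^'m \<Rightarrow> real^'s \<Rightarrow> real" where
  "irmgl_beta A eth R sig nu0 nu1 nu2 vd u =
     (let r = A *v u - vd; L = gl_Lap eth R sig u *v u in
      if L = 0 then 0 else min (min (nu0 * (norm r)^2 / norm L) (nu1 / norm L)) nu2)"

primrec irmgl ::
  "real^('s::finite)^'m::finite \<Rightarrow> (real^'m \<Rightarrow> real^'s) \<Rightarrow> ('s \<Rightarrow> 's \<Rightarrow> real) \<Rightarrow> real \<Rightarrow> real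
     \<Rightarrow> real \<Rightarrow> real \<Rightarrow> real \<Rightarrow> real \<Rightarrow> real \<Rightarrow> real^'m \<Rightarrow> nat \<Rightarrow> real^'s" where
  "irmgl A Psi eth R sig eta0 eta1 nu0 nu1 nu2 vd 0 = Psi vd"
| "irmgl A Psi eth R sig eta0 eta1 nu0 nu1 nu2 vd (Suc k) =
     (let u = irmgl A Psi eth R sig eta0 eta1 nu0 nu1 nu2 vd k in
      u - irmgl_alpha A eta0 eta1 vd u *\<^sub>R (transpose A *v (A *v u - vd))
        - irmgl_beta A eth R sig nu0 nu1 nu2 vd u *\<^sub>R (gl_Lap eth R sig u *v u))"

definition irmgl_stop ::
  "real^('s::finite)^'m::finite \<Rightarrow> (real^'m \<Rightarrow> real^'s) \<Rightarrow> ('s \<Rightarrow> 's \<Rightarrow> real) \<Rightarrow> real \<Rightarrow> real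
     \<Rightarrow> real \<Rightarrow> real \<Rightarrow> real \<Rightarrow> real \<Rightarrow> real \<Rightarrow> real^'m \<Rightarrow> real \<Rightarrow> real \<Rightarrow> nat" where
  "irmgl_stop A Psi eth R sig eta0 eta1 nu0 nu1 nu2 vd tau delta =
     (LEAST k. norm (A *v irmgl A Psi eth R sig eta0 eta1 nu0 nu1 nu2 vd k - vd) \<le> tau * delta)"

end

theory Submission
  imports Defs
begin

text \<open>As long as the discrepancy satisfies \<open>\<parallel>A u\<^sub>k - v\<^sup>\<delta>\<parallel> \<ge> \<tau>\<delta>\<close>, one step of the iteration
  decreases \<open>\<parallel>u\<^sub>k - u\<parallel>\<^sup>2\<close> by at least \<open>2 C \<parallel>A u\<^sub>k - v\<^sup>\<delta>\<parallel>\<^sup>2\<close> for every solution \<open>u\<close> within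
  distance \<open>\<wp>\<close>: the step-size caps bound the data term from below through the discrepancy, and
  the graph-Laplacian term and the squared increment from above by multiples of the squared
  residual. For exact data the residuals are therefore square-summable and the iterates stay in
  a ball, so a cluster point solves \<open>A u = v\<close> and this Fejer monotonicity makes it the limit
  \<open>u\<^sup>*\<close>. For noisy data each fixed iterate depends continuously on the data (a step size can
  jump only where its direction vanishes), so up to a fixed index \<open>K\<close> the noisy iterates track
  the exact ones, and from \<open>K\<close> on the noisy iterates can only approach \<open>u\<^sup>*\<close> until the
  discrepancy principle stops them.\<close>

lemma tendsto_matrix_vector_mult [tendsto_intros]:
  "(f \<longlongrightarrow> a) F \<Longrightarrow> ((\<lambda>x. (M::real^'n::finite^'k::finite) *v f x) \<longlongrightarrow> M *v a) F"
  by (rule bounded_linear.tendsto[OF matrix_vector_mul_bounded_linear])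

lemma tendsto_gl_Lap_mult:
  fixes X :: "'a \<Rightarrow> real^'s::finite"
  assumes "(X \<longlongrightarrow> u) F" and "sig \<noteq> 0"
  shows "((\<lambda>x. gl_Lap eth R sig (X x) *v X x) \<longlongrightarrow> gl_Lap eth R sig u *v u) F"
proof (rule vec_tendstoI)
  fix i
  show "((\<lambda>x. (gl_Lap eth R sig (X x) *v X x) $ i) \<longlongrightarrow> (gl_Lap eth R sig u *v u) $ i) F"
    unfolding matrix_vector_mult_def gl_Lap_def gl_D_def gl_W_def gl_weight_def vec_lambda_beta
      vector_minus_component
    using assms by (auto intro!: tendsto_intros)
qed

lemma norm_transpose_mult_le:
  fixes A :: "real^'n::finite^'m::finite"
  shows "norm (transpose A *v r) \<le> onorm (\<lambda>x. A *v x) * norm r"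
proof -
  let ?g = "transpose A *v r" and ?c = "onorm (\<lambda>x. A *v x)"
  have "norm ?g * norm ?g = inner ?g ?g"
    by (simp flip: power2_eq_square power2_norm_eq_inner)
  also have "\<dots> = inner r (A *v ?g)"
    by (simp only: transpose_matrix_vector dot_lmul_matrix)
  also have "\<dots> \<le> norm r * norm (A *v ?g)"
    by (rule norm_cauchy_schwarz)
  also have "\<dots> \<le> norm r * (?c * norm ?g)"
    by (intro mult_left_mono onorm) auto
  finally have "norm ?g * norm ?g \<le> (?c * norm r) * norm ?g"
    by (simp add: algebra_simps)
  moreover have "0 \<le> ?c * norm r"
    by (intro mult_nonneg_nonneg onorm_pos_le) auto
  ultimately show ?thesis
    by (metis mult_right_le_imp_le norm_ge_zero order_le_less)
qed

lemma irmgl_alpha_bounds: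
  assumes "0 \<le> eta0" "0 \<le> eta1"
  shows "0 \<le> irmgl_alpha A eta0 eta1 vd u" and "irmgl_alpha A eta0 eta1 vd u \<le> eta1"
    and "irmgl_alpha A eta0 eta1 vd u * norm (transpose A *v (A *v u - vd))^2
      \<le> eta0 * norm (A *v u - vd)^2"
  using assms by (auto simp: irmgl_alpha_def Let_def min_def field_simps)

lemma irmgl_alpha_ge:
  assumes "0 \<le> eta" "eta * (onorm (\<lambda>x. A *v x))^2 \<le> eta0" "eta \<le> eta1"
  shows "eta \<le> irmgl_alpha A eta0 eta1 vd u"
proof -
  let ?r = "A *v u - vd" and ?g = "transpose A *v (A *v u - vd)"
  have "eta * norm ?g ^ 2 \<le> eta * (onorm (\<lambda>x. A *v x) * norm ?r) ^ 2"
    using assms(1) norm_transpose_mult_le by (intro mult_left_mono power_mono) auto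
  also have "\<dots> \<le> eta0 * norm ?r ^ 2"
    using assms(2) by (simp add: power_mult_distrib mult_right_mono flip: mult.assoc)
  finally show ?thesis
    using assms(3) by (simp add: irmgl_alpha_def Let_def pos_le_divide_eq)
qed

lemma irmgl_beta_bounds:
  assumes "0 \<le> nu0" "0 \<le> nu1" "0 \<le> nu2"
  shows "0 \<le> irmgl_beta A eth R sig nu0 nu1 nu2 vd u"
    and "irmgl_beta A eth R sig nu0 nu1 nu2 vd u \<le> nu2"
    and "irmgl_beta A eth R sig nu0 nu1 nu2 vd u * norm (gl_Lap eth R sig u *v u)
      \<le> nu0 * norm (A *v u - vd)^2"
    and "irmgl_beta A eth R sig nu0 nu1 nu2 vd u * norm (gl_Lap eth R sig u *v u) \<le> nu1"
  using assms by (auto simp: irmgl_beta_def Let_def min_def field_simps)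

lemma tendsto_irmgl_alpha:
  assumes X: "(X \<longlongrightarrow> u) F" and Y: "(Y \<longlongrightarrow> y) F"
    and grad: "transpose A *v (A *v u - y) \<noteq> 0"
  shows "((\<lambda>x. irmgl_alpha A eta0 eta1 (Y x) (X x)) \<longlongrightarrow> irmgl_alpha A eta0 eta1 y u) F"
proof -
  let ?a = "\<lambda>y u. min (eta0 * norm (A *v u - y)^2 / norm (transpose A *v (A *v u - y))^2) eta1"
  have "((\<lambda>x. transpose A *v (A *v X x - Y x)) \<longlongrightarrow> transpose A *v (A *v u - y)) F"
    by (intro tendsto_intros X Y)
  then have "\<forall>\<^sub>F x in F. transpose A *v (A *v X x - Y x) \<noteq> 0"
    using grad by (rule tendsto_imp_eventually_ne)
  then have "\<forall>\<^sub>F x in F. ?a (Y x) (X x) = irmgl_alpha A eta0 eta1 (Y x) (X x)"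
    by eventually_elim (simp add: irmgl_alpha_def Let_def)
  moreover have "((\<lambda>x. ?a (Y x) (X x)) \<longlongrightarrow> ?a y u) F"
    using grad by (intro tendsto_intros X Y) auto
  ultimately show ?thesis
    using grad by (simp add: irmgl_alpha_def Let_def Lim_transform_eventually)
qed

lemma tendsto_irmgl_beta:
  assumes X: "(X \<longlongrightarrow> u) F" and Y: "(Y \<longlongrightarrow> y) F" and "sig \<noteq> 0"
    and lap: "gl_Lap eth R sig u *v u \<noteq> 0"
  shows "((\<lambda>x. irmgl_beta A eth R sig nu0 nu1 nu2 (Y x) (X x))
    \<longlongrightarrow> irmgl_beta A eth R sig nu0 nu1 nu2 y u) F"
proof -
  let ?L = "\<lambda>u. gl_Lap eth R sig u *v u"
  let ?b = "\<lambda>y u. min (min (nu0 * norm (A *v u - y)^2 / norm (?L u)) (nu1 / norm (?L u))) nu2"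
  have L: "((\<lambda>x. ?L (X x)) \<longlongrightarrow> ?L u) F"
    using X \<open>sig \<noteq> 0\<close> by (rule tendsto_gl_Lap_mult)
  then have "\<forall>\<^sub>F x in F. ?L (X x) \<noteq> 0"
    using lap by (rule tendsto_imp_eventually_ne)
  then have "\<forall>\<^sub>F x in F. ?b (Y x) (X x) = irmgl_beta A eth R sig nu0 nu1 nu2 (Y x) (X x)"
    by eventually_elim (simp add: irmgl_beta_def Let_def)
  moreover have "((\<lambda>x. ?b (Y x) (X x)) \<longlongrightarrow> ?b y u) F"
    using lap by (intro tendsto_intros X Y L) auto
  ultimately show ?thesis
    using lap by (simp add: irmgl_beta_def Let_def Lim_transform_eventually)
qed

lemma tendsto_scaleR_bounded_factor:
  fixes h :: "'a \<Rightarrow> 'b::real_normed_vector"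
  assumes h: "(h \<longlongrightarrow> h0) F" and bounded: "\<forall>\<^sub>F x in F. \<bar>c x\<bar> \<le> B"
    and c: "h0 \<noteq> 0 \<Longrightarrow> (c \<longlongrightarrow> c0) F"
  shows "((\<lambda>x. c x *\<^sub>R h x) \<longlongrightarrow> c0 *\<^sub>R h0) F"
proof (cases "h0 = 0")
  case True
  have "((\<lambda>x. c x *\<^sub>R h x) \<longlongrightarrow> 0) F"
  proof (rule Lim_null_comparison)
    show "\<forall>\<^sub>F x in F. norm (c x *\<^sub>R h x) \<le> B * norm (h x)"
      using bounded by eventually_elim (simp add: mult_right_mono)
    show "((\<lambda>x. B * norm (h x)) \<longlongrightarrow> 0) F"
      using tendsto_mult_right_zero[OF tendsto_norm_zero[OF h[unfolded True]]] .
  qed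
  with True show ?thesis by simp
next
  case False
  with h c show ?thesis by (intro tendsto_scaleR)
qed

lemma LIMSEQ_subseq_Fejer_monotone:
  fixes z :: "nat \<Rightarrow> 'a::metric_space"
  assumes sub: "(z \<circ> r) \<longlonglongrightarrow> l" and "0 < \<epsilon>"
    and Fejer: "\<And>n. dist (z n) l \<le> \<epsilon> \<Longrightarrow> dist (z (Suc n)) l \<le> dist (z n) l"
  shows "z \<longlonglongrightarrow> l"
proof (rule metric_LIMSEQ_I)
  fix e :: real
  assume "0 < e"
  then obtain N where N: "dist (z (r N)) l < min e \<epsilon>"
    using metric_LIMSEQ_D[OF sub, of "min e \<epsilon>"] \<open>0 < \<epsilon>\<close> by auto
  have "dist (z n) l \<le> dist (z (r N)) l" if "r N \<le> n" for n
    using that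
  proof (induction rule: dec_induct)
    case (step n)
    then show ?case using Fejer[of n] N by linarith
  qed simp
  then show "\<exists>N. \<forall>n\<ge>N. dist (z n) l < e"
    using N by (meson le_less_trans min.strict_boundedE)
qed

lemma tendsto_at_right_0_if_norm_diff_le:
  fixes f :: "real \<Rightarrow> 'a::real_normed_vector"
  assumes "\<forall>\<delta>>0. norm (f \<delta> - v) \<le> \<delta>"
  shows "(f \<longlongrightarrow> v) (at_right 0)"
proof -
  have "((\<lambda>\<delta>. f \<delta> - v) \<longlongrightarrow> 0) (at_right 0)"
  proof (rule Lim_null_comparison)
    show "\<forall>\<^sub>F \<delta> in at_right 0. norm (f \<delta> - v) \<le> \<delta>"
      using eventually_at_right_less[of 0] by eventually_elim (use assms in auto)
  qed (rule tendsto_ident_at)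
  then show ?thesis
    by (simp add: LIM_zero_iff)
qed

lemma eventually_residual_gt_at_right_0:
  fixes A :: "real^'n::finite^'m::finite"
  assumes "(U \<longlongrightarrow> w) (at_right 0)" and "(Y \<longlongrightarrow> y) (at_right 0)" and "A *v w \<noteq> y"
  shows "\<forall>\<^sub>F \<delta> in at_right 0. tau * \<delta> < norm (A *v U \<delta> - Y \<delta>)"
proof -
  have "((\<lambda>\<delta>. norm (A *v U \<delta> - Y \<delta>) - tau * \<delta>) \<longlongrightarrow> norm (A *v w - y) - tau * 0) (at_right 0)"
    by (intro tendsto_intros assms tendsto_ident_at)
  then have "\<forall>\<^sub>F \<delta> in at_right 0. 0 < norm (A *v U \<delta> - Y \<delta>) - tau * \<delta>"
    using assms(3) by (intro order_tendstoD(1)) auto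
  then show ?thesis
    by eventually_elim auto
qed

locale irmgl_method =
  fixes A :: "real^'s::finite^'m::finite" and eth :: "'s \<Rightarrow> 's \<Rightarrow> real"
    and R sig eta0 eta1 nu0 nu1 nu2 eta tau wp :: real
  assumes sig_nonzero: "sig \<noteq> 0"
    and eta0_nonneg: "0 \<le> eta0" and eta1_nonneg: "0 \<le> eta1"
    and nu0_nonneg: "0 \<le> nu0" and nu1_nonneg: "0 \<le> nu1" and nu2_nonneg: "0 \<le> nu2"
    and eta_le0: "eta * (onorm (\<lambda>x. A *v x))^2 \<le> eta0" and eta_le1: "eta \<le> eta1"
    and tau_pos: "0 < tau" and wp_pos: "0 < wp"
    and margin_pos: "0 < eta - eta1 / tau - nu0 * (wp + nu1) - eta0 * eta1"
begin

definition C :: real where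
  "C = eta - eta1 / tau - nu0 * (wp + nu1) - eta0 * eta1"

lemma C_pos: "0 < C"
  using margin_pos by (simp add: C_def)

lemma eta_nonneg: "0 \<le> eta"
proof -
  have "0 \<le> eta1 / tau + nu0 * (wp + nu1) + eta0 * eta1"
    using eta0_nonneg eta1_nonneg nu0_nonneg nu1_nonneg wp_pos tau_pos by simp
  then show ?thesis
    using margin_pos by linarith
qed

abbreviation alpha :: "real^'m \<Rightarrow> real^'s \<Rightarrow> real" where
  "alpha \<equiv> irmgl_alpha A eta0 eta1"

abbreviation beta :: "real^'m \<Rightarrow> real^'s \<Rightarrow> real" where
  "beta \<equiv> irmgl_beta A eth R sig nu0 nu1 nu2"

abbreviation Lap :: "real^'s \<Rightarrow> real^'s" where
  "Lap u \<equiv> gl_Lap eth R sig u *v u"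

abbreviation iterates :: "(real^'m \<Rightarrow> real^'s) \<Rightarrow> real^'m \<Rightarrow> nat \<Rightarrow> real^'s" where
  "iterates Psi \<equiv> irmgl A Psi eth R sig eta0 eta1 nu0 nu1 nu2"

abbreviation stop :: "(real^'m \<Rightarrow> real^'s) \<Rightarrow> real^'m \<Rightarrow> real \<Rightarrow> nat" where
  "stop Psi vd d \<equiv> irmgl_stop A Psi eth R sig eta0 eta1 nu0 nu1 nu2 vd tau d"

definition step :: "real^'m \<Rightarrow> real^'s \<Rightarrow> real^'s" where
  "step vd u = u - alpha vd u *\<^sub>R (transpose A *v (A *v u - vd)) - beta vd u *\<^sub>R Lap u"

lemma iterates_Suc: "iterates Psi vd (Suc k) = step vd (iterates Psi vd k)"
  by (simp add: step_def Let_def)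

lemma step_fixed: "A *v u = vd \<Longrightarrow> step vd u = u"
  using nu1_nonneg nu2_nonneg by (simp add: step_def irmgl_beta_def Let_def min_def)

lemma tendsto_step:
  assumes X: "(X \<longlongrightarrow> u) F" and Y: "(Y \<longlongrightarrow> y) F"
  shows "((\<lambda>x. step (Y x) (X x)) \<longlongrightarrow> step y u) F"
  unfolding step_def
proof (intro tendsto_diff X tendsto_scaleR_bounded_factor)
  show "((\<lambda>x. transpose A *v (A *v X x - Y x)) \<longlongrightarrow> transpose A *v (A *v u - y)) F"
    by (intro tendsto_intros X Y)
  show "\<forall>\<^sub>F x in F. \<bar>alpha (Y x) (X x)\<bar> \<le> eta1"
    using irmgl_alpha_bounds(1,2)[OF eta0_nonneg eta1_nonneg, of A]
    by (intro always_eventually allI) (simp add: abs_le_iff)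
  show "transpose A *v (A *v u - y) \<noteq> 0 \<Longrightarrow> ((\<lambda>x. alpha (Y x) (X x)) \<longlongrightarrow> alpha y u) F"
    by (rule tendsto_irmgl_alpha[OF X Y])
  show "((\<lambda>x. Lap (X x)) \<longlongrightarrow> Lap u) F"
    using X sig_nonzero by (rule tendsto_gl_Lap_mult)
  show "\<forall>\<^sub>F x in F. \<bar>beta (Y x) (X x)\<bar> \<le> nu2"
    using irmgl_beta_bounds(1,2)[OF nu0_nonneg nu1_nonneg nu2_nonneg, of A]
    by (intro always_eventually allI) (simp add: abs_le_iff)
  show "Lap u \<noteq> 0 \<Longrightarrow> ((\<lambda>x. beta (Y x) (X x)) \<longlongrightarrow> beta y u) F"
    by (rule tendsto_irmgl_beta[OF X Y sig_nonzero])
qed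

lemma iterates_tendsto:
  assumes "(vdel \<longlongrightarrow> v) F" and "((\<lambda>x. Psi (vdel x)) \<longlongrightarrow> Psi v) F"
  shows "((\<lambda>x. iterates Psi (vdel x) k) \<longlongrightarrow> iterates Psi v k) F"
proof (induction k)
  case 0
  then show ?case using assms(2) by simp
next
  case (Suc k)
  then show ?case using tendsto_step[OF Suc assms(1)] by (simp only: iterates_Suc)
qed

lemma norm_step_increment_sq_le:
  "norm (alpha vd u *\<^sub>R (transpose A *v (A *v u - vd)) + beta vd u *\<^sub>R Lap u)^2
    \<le> 2 * (eta0 * eta1 + nu0 * nu1) * norm (A *v u - vd)^2"
proof -
  let ?X = "norm (A *v u - vd)^2"
  let ?p = "alpha vd u * norm (transpose A *v (A *v u - vd))" and ?q = "beta vd u * norm (Lap u)"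
  note a = irmgl_alpha_bounds[OF eta0_nonneg eta1_nonneg, of A vd u]
  note b = irmgl_beta_bounds[OF nu0_nonneg nu1_nonneg nu2_nonneg, of A eth R sig vd u]
  have p: "?p^2 \<le> eta0 * eta1 * ?X"
  proof -
    have "?p^2 = alpha vd u * (alpha vd u * norm (transpose A *v (A *v u - vd))^2)"
      by (simp add: power2_eq_square)
    also have "\<dots> \<le> eta1 * (eta0 * ?X)"
      by (rule mult_mono) (use a eta1_nonneg in auto)
    finally show ?thesis by (simp add: mult_ac)
  qed
  have q: "?q^2 \<le> nu0 * nu1 * ?X"
  proof -
    have "?q * ?q \<le> nu1 * (nu0 * ?X)"
      by (rule mult_mono) (use b nu1_nonneg in auto)
    then show ?thesis by (simp add: power2_eq_square mult_ac)
  qed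
  have "norm (alpha vd u *\<^sub>R (transpose A *v (A *v u - vd)) + beta vd u *\<^sub>R Lap u) \<le> ?p + ?q"
    using norm_triangle_ineq[of "alpha vd u *\<^sub>R (transpose A *v (A *v u - vd))" "beta vd u *\<^sub>R Lap u"]
      a(1) b(1) by simp
  then have "norm (alpha vd u *\<^sub>R (transpose A *v (A *v u - vd)) + beta vd u *\<^sub>R Lap u)^2
      \<le> (?p + ?q)^2"
    by (intro power_mono) auto
  also have "\<dots> \<le> 2 * ?p^2 + 2 * ?q^2"
    using zero_le_power2[of "?p - ?q"] by (simp only: power2_eq_square algebra_simps)
  also have "\<dots> \<le> 2 * (eta0 * eta1 + nu0 * nu1) * ?X"
    using p q by (simp add: ring_distribs)
  finally show ?thesis .
qed

lemma data_term_lower_bound: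
  assumes sol: "A *v uh = v" and noise: "norm (vd - v) \<le> d"
    and disc: "tau * d \<le> norm (A *v u - vd)"
  shows "(eta - eta1 / tau) * norm (A *v u - vd)^2
    \<le> alpha vd u * inner (u - uh) (transpose A *v (A *v u - vd))"
proof -
  let ?r = "A *v u - vd"
  let ?X = "norm ?r ^ 2"
  note a = irmgl_alpha_bounds(1,2)[OF eta0_nonneg eta1_nonneg, of A vd u]
    irmgl_alpha_ge[OF eta_nonneg eta_le0 eta_le1, of vd u]
  have Ae: "A *v (u - uh) = ?r + (vd - v)"
    using sol by (simp add: matrix_vector_mult_diff_distrib)
  have "inner (u - uh) (transpose A *v ?r) = inner ?r (A *v (u - uh))"
    using dot_lmul_matrix[of ?r A "u - uh"] by (simp add: inner_commute)
  also have "\<dots> = ?X + inner ?r (vd - v)"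
    by (simp only: Ae inner_add_right power2_norm_eq_inner)
  finally have "inner (u - uh) (transpose A *v ?r) = ?X + inner ?r (vd - v)" .
  moreover have "- (d * norm ?r) \<le> inner ?r (vd - v)"
    using Cauchy_Schwarz_ineq2[of ?r "vd - v"] mult_left_mono[OF noise norm_ge_zero[of ?r]]
    by (simp add: mult.commute abs_le_iff)
  moreover have "d * norm ?r \<le> ?X / tau"
    using mult_right_mono[OF disc norm_ge_zero[of ?r]] tau_pos
    by (simp add: pos_le_divide_eq power2_eq_square mult_ac)
  ultimately have inner_ge: "?X - ?X / tau \<le> inner (u - uh) (transpose A *v ?r)"
    by linarith
  have "(eta - eta1 / tau) * ?X = eta * ?X - eta1 * ?X / tau"
    by (simp add: left_diff_distrib)
  also have "\<dots> \<le> alpha vd u * ?X - alpha vd u * ?X / tau"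
  proof (rule diff_mono)
    show "eta * ?X \<le> alpha vd u * ?X"
      using a(3) by (rule mult_right_mono) simp
    show "alpha vd u * ?X / tau \<le> eta1 * ?X / tau"
      using tau_pos by (intro divide_right_mono mult_right_mono a(2)) auto
  qed
  also have "\<dots> = alpha vd u * (?X - ?X / tau)"
    by (simp add: right_diff_distrib)
  also have "\<dots> \<le> alpha vd u * inner (u - uh) (transpose A *v ?r)"
    using inner_ge a(1) by (rule mult_left_mono)
  finally show ?thesis .
qed

lemma regularization_term_lower_bound:
  assumes "norm (u - uh) \<le> wp"
  shows "- (nu0 * wp * norm (A *v u - vd)^2) \<le> beta vd u * inner (u - uh) (Lap u)"
proof -
  note b = irmgl_beta_bounds(1,3)[OF nu0_nonneg nu1_nonneg nu2_nonneg, of A eth R sig vd u]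
  have "- inner (u - uh) (Lap u) \<le> norm (u - uh) * norm (Lap u)"
    using Cauchy_Schwarz_ineq2 by (rule abs_le_D2)
  then have "beta vd u * - inner (u - uh) (Lap u) \<le> beta vd u * (norm (u - uh) * norm (Lap u))"
    using b(1) by (rule mult_left_mono)
  also have "\<dots> = norm (u - uh) * (beta vd u * norm (Lap u))"
    by (rule mult.left_commute)
  also have "\<dots> \<le> wp * (nu0 * norm (A *v u - vd)^2)"
    by (rule mult_mono) (use assms b wp_pos in auto)
  finally show ?thesis
    by (simp add: mult_ac)
qed

lemma step_descent:
  assumes sol: "A *v uh = v" and noise: "norm (vd - v) \<le> d"
    and disc: "tau * d \<le> norm (A *v u - vd)" and close: "norm (u - uh) \<le> wp"
  shows "norm (step vd u - uh)^2 \<le> norm (u - uh)^2 - 2 * C * norm (A *v u - vd)^2"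
proof -
  let ?g = "transpose A *v (A *v u - vd)" and ?X = "norm (A *v u - vd)^2"
  let ?incr = "alpha vd u *\<^sub>R ?g + beta vd u *\<^sub>R Lap u"
  have incr: "step vd u - uh = (u - uh) - ?incr"
    by (simp add: step_def algebra_simps)
  have "norm (step vd u - uh)^2 = norm (u - uh)^2 - 2 * inner (u - uh) ?incr + norm ?incr^2"
    unfolding incr using dot_norm_neg[of "u - uh" ?incr] by (simp add: field_simps)
  also have "\<dots> = norm (u - uh)^2 - 2 * (alpha vd u * inner (u - uh) ?g)
      - 2 * (beta vd u * inner (u - uh) (Lap u)) + norm ?incr^2"
    by (simp only: inner_add_right inner_scaleR_right) simp
  also have "\<dots> \<le> norm (u - uh)^2 - 2 * ((eta - eta1 / tau) * ?X) + 2 * (nu0 * wp * ?X)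
      + 2 * (eta0 * eta1 + nu0 * nu1) * ?X"
    using data_term_lower_bound[OF sol noise disc] regularization_term_lower_bound[OF close, where vd = vd]
      norm_step_increment_sq_le[of vd u] by linarith
  also have "\<dots> = norm (u - uh)^2 - 2 * C * ?X"
    by (simp add: C_def algebra_simps)
  finally show ?thesis .
qed

lemma descent_telescope:
  assumes run: "\<And>k. z (Suc k) = step vd (z k)"
    and sol: "A *v uh = v" and noise: "norm (vd - v) \<le> d"
    and start: "norm (z 0 - uh) \<le> wp"
    and disc: "\<And>k. k < n \<Longrightarrow> tau * d \<le> norm (A *v z k - vd)"
  shows "norm (z n - uh)^2 + 2 * C * (\<Sum>k<n. norm (A *v z k - vd)^2) \<le> norm (z 0 - uh)^2"
  using disc
proof (induction n)
  case 0
  then show ?case by simp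
next
  case (Suc n)
  let ?S = "\<Sum>k<n. norm (A *v z k - vd)^2"
  have IH: "norm (z n - uh)^2 + 2 * C * ?S \<le> norm (z 0 - uh)^2"
    using Suc by simp
  have "norm (z n - uh)^2 \<le> norm (z n - uh)^2 + 2 * C * ?S"
    using C_pos by (simp add: sum_nonneg)
  also have "\<dots> \<le> norm (z 0 - uh)^2"
    by (rule IH)
  also have "\<dots> \<le> wp^2"
    by (rule power_mono[OF start norm_ge_zero])
  finally have "norm (z n - uh) \<le> wp"
    by (rule power2_le_imp_le) (use wp_pos in simp)
  then have "norm (z (Suc n) - uh)^2 \<le> norm (z n - uh)^2 - 2 * C * norm (A *v z n - vd)^2"
    unfolding run by (rule step_descent[OF sol noise Suc.prems[OF lessI]])
  moreover have "2 * C * (\<Sum>k<Suc n. norm (A *v z k - vd)^2) = 2 * C * ?S + 2 * C * norm (A *v z n - vd)^2"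
    by (simp add: distrib_left)
  ultimately show ?case
    using IH by linarith
qed

lemma descent_dist_le:
  assumes run: "\<And>k. z (Suc k) = step vd (z k)"
    and sol: "A *v uh = v" and noise: "norm (vd - v) \<le> d"
    and start: "norm (z 0 - uh) \<le> wp"
    and disc: "\<And>k. k < n \<Longrightarrow> tau * d \<le> norm (A *v z k - vd)"
  shows "norm (z n - uh) \<le> norm (z 0 - uh)"
proof -
  have "0 \<le> 2 * C * (\<Sum>k<n. norm (A *v z k - vd)^2)"
    using C_pos by (simp add: sum_nonneg)
  then have "norm (z n - uh)^2 \<le> norm (z 0 - uh)^2"
    using descent_telescope[where n = n, OF run sol noise start disc] by linarith
  then show ?thesis
    by (rule power2_le_imp_le) simp
qed

lemma discrepancy_reached:
  assumes run: "\<And>k. z (Suc k) = step vd (z k)"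
    and sol: "A *v uh = v" and noise: "norm (vd - v) \<le> d" and "0 < d"
    and start: "norm (z 0 - uh) \<le> wp"
  shows "\<exists>k. norm (A *v z k - vd) \<le> tau * d"
proof (rule ccontr)
  assume "\<nexists>k. norm (A *v z k - vd) \<le> tau * d"
  then have disc: "tau * d \<le> norm (A *v z k - vd)" for k
    by (meson not_le less_imp_le)
  define c where "c = 2 * C * (tau * d)^2"
  have "0 < c"
    using C_pos tau_pos \<open>0 < d\<close> by (simp add: c_def)
  obtain n :: nat where n: "wp^2 / c < n"
    using reals_Archimedean2 by blast
  have "(\<Sum>k<n. (tau * d)^2) \<le> (\<Sum>k<n. norm (A *v z k - vd)^2)"
    using disc tau_pos \<open>0 < d\<close> by (intro sum_mono power_mono) auto
  then have "n * c \<le> 2 * C * (\<Sum>k<n. norm (A *v z k - vd)^2)"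
    using C_pos by (simp add: c_def mult_ac)
  also have "\<dots> \<le> wp^2"
    using descent_telescope[where n = n, OF run sol noise start disc]
      power_mono[OF start norm_ge_zero, of 2] zero_le_power2[of "norm (z n - uh)"]
    by linarith
  also have "wp^2 < n * c"
    using n \<open>0 < c\<close> by (simp add: pos_divide_less_eq)
  finally show False
    by simp
qed

lemma stop_index:
  assumes sol: "A *v uh = v" and noise: "norm (vd - v) \<le> d" and "0 < d"
    and close: "norm (iterates Psi vd K - uh) \<le> wp"
  shows "norm (A *v iterates Psi vd (stop Psi vd d) - vd) \<le> tau * d"
    and "K \<le> stop Psi vd d \<Longrightarrow>
      norm (iterates Psi vd (stop Psi vd d) - uh) \<le> norm (iterates Psi vd K - uh)"
proof -
  let ?z = "iterates Psi vd"
  let ?P = "\<lambda>k. norm (A *v ?z k - vd) \<le> tau * d"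
  have stop: "stop Psi vd d = (LEAST k. ?P k)"
    by (simp add: irmgl_stop_def)
  have run: "?z (K + Suc i) = step vd (?z (K + i))" for i
    by (simp only: add_Suc_right iterates_Suc)
  obtain i0 where "?P (K + i0)"
    using discrepancy_reached[of "\<lambda>i. ?z (K + i)", OF run sol noise \<open>0 < d\<close>] close
    by auto
  then show "?P (stop Psi vd d)"
    unfolding stop by (rule LeastI)
  assume "K \<le> stop Psi vd d"
  then obtain i where i: "stop Psi vd d = K + i"
    using le_Suc_ex by blast
  have "tau * d \<le> norm (A *v ?z (K + j) - vd)" if "j < i" for j
    using not_less_Least[of "K + j" ?P] that by (simp add: i[unfolded stop])
  then have "norm (?z (K + i) - uh) \<le> norm (?z (K + 0) - uh)"
    using descent_dist_le[of "\<lambda>j. ?z (K + j)", OF run sol noise] close by simp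
  then show "norm (?z (stop Psi vd d) - uh) \<le> norm (?z K - uh)"
    by (simp add: i)
qed

lemma exact_data_residual_tendsto:
  assumes run: "\<And>k. z (Suc k) = step v (z k)"
    and sol: "A *v uh = v" and start: "norm (z 0 - uh) \<le> wp"
  shows "(\<lambda>k. A *v z k) \<longlonglongrightarrow> v"
proof -
  have partial: "(\<Sum>k<n. norm (A *v z k - v)^2) \<le> wp^2 / (2 * C)" for n
  proof -
    have "norm (z n - uh)^2 + 2 * C * (\<Sum>k<n. norm (A *v z k - v)^2) \<le> norm (z 0 - uh)^2"
      by (rule descent_telescope[where d = 0, OF run sol _ start]) simp_all
    then have "2 * C * (\<Sum>k<n. norm (A *v z k - v)^2) \<le> wp^2"
      using power_mono[OF start norm_ge_zero, of 2] zero_le_power2[of "norm (z n - uh)"]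
      by linarith
    then show ?thesis
      using C_pos by (simp add: pos_le_divide_eq mult.commute)
  qed
  have "summable (\<lambda>k. norm (A *v z k - v)^2)"
  proof (rule bounded_imp_summable)
    show "(\<Sum>k\<le>n. norm (A *v z k - v)^2) \<le> wp^2 / (2 * C)" for n
      using partial[of "Suc n"] by (simp only: lessThan_Suc_atMost)
  qed simp
  then have "(\<lambda>k. norm (A *v z k - v)^2) \<longlonglongrightarrow> 0"
    by (rule summable_LIMSEQ_zero)
  then have "(\<lambda>k. norm (A *v z k - v)) \<longlonglongrightarrow> 0"
    using tendsto_real_sqrt by fastforce
  then show ?thesis
    by (simp add: tendsto_norm_zero_iff LIM_zero_iff)
qed

lemma exact_data_convergence:
  assumes start: "norm (udag - Psi (A *v udag)) \<le> wp"
  obtains ustar where "A *v ustar = A *v udag" and "iterates Psi (A *v udag) \<longlonglongrightarrow> ustar"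
proof -
  define v where "v = A *v udag"
  define w where "w = iterates Psi v"
  have run: "w (Suc k) = step v (w k)" for k
    by (simp only: w_def iterates_Suc)
  have w0: "norm (w 0 - udag) \<le> wp"
    using start by (simp add: w_def v_def norm_minus_commute)
  have Aw: "(\<lambda>k. A *v w k) \<longlonglongrightarrow> v"
    using run v_def[symmetric] w0 by (rule exact_data_residual_tendsto)
  have "w k \<in> cball udag wp" for k
    using descent_dist_le[OF run _ _ w0, of v 0 k] w0 by (simp add: v_def dist_norm norm_minus_commute)
  then obtain ustar r where "strict_mono r" and sub: "(w \<circ> r) \<longlonglongrightarrow> ustar"
    using compact_imp_seq_compact[OF compact_cball] by (meson seq_compactE)
  have "(\<lambda>n. A *v (w \<circ> r) n) \<longlonglongrightarrow> A *v ustar"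
    using sub by (rule tendsto_matrix_vector_mult)
  moreover have "(\<lambda>n. A *v (w \<circ> r) n) \<longlonglongrightarrow> v"
    using LIMSEQ_subseq_LIMSEQ[OF Aw \<open>strict_mono r\<close>] by (simp add: o_def)
  ultimately have sol: "A *v ustar = v"
    by (rule LIMSEQ_unique)
  have "w \<longlonglongrightarrow> ustar"
  proof (rule LIMSEQ_subseq_Fejer_monotone[OF sub wp_pos])
    fix n
    assume "dist (w n) ustar \<le> wp"
    then have "norm (w (n + 1) - ustar) \<le> norm (w (n + 0) - ustar)"
      using run by (intro descent_dist_le[of "\<lambda>j. w (n + j)", OF _ sol, where d = 0])
        (simp_all add: dist_norm)
    then show "dist (w (Suc n)) ustar \<le> dist (w n) ustar"
      by (simp add: dist_norm)
  qed
  show thesis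
  proof (rule that)
    show "A *v ustar = A *v udag"
      using sol by (simp only: v_def)
    show "iterates Psi (A *v udag) \<longlonglongrightarrow> ustar"
      using \<open>w \<longlonglongrightarrow> ustar\<close> by (simp only: w_def v_def)
  qed
qed

lemma exact_iterate_eq_limit:
  assumes lim: "iterates Psi v \<longlonglongrightarrow> ustar" and sol: "A *v iterates Psi v j = v"
  shows "iterates Psi v j = ustar"
proof -
  have "iterates Psi v (i + j) = iterates Psi v j" for i
    by (induction i) (simp_all only: add_0 add_Suc iterates_Suc step_fixed[OF sol])
  then have "(\<lambda>i. iterates Psi v j) \<longlonglongrightarrow> ustar"
    using LIMSEQ_ignore_initial_segment[OF lim, of j] by simp
  then show ?thesis
    by (rule LIMSEQ_const_iff[THEN iffD1])
qed

lemma stopped_iterate_close: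
  assumes lim: "iterates Psi v \<longlonglongrightarrow> ustar" and sol: "A *v ustar = v"
    and noise: "norm (vd - v) \<le> d" and "0 < d"
    and close: "norm (iterates Psi vd K - ustar) < e" "norm (iterates Psi vd K - ustar) \<le> wp"
    and early: "\<And>j. j < K \<Longrightarrow> norm (iterates Psi vd j - iterates Psi v j) < e"
    and early_disc: "\<And>j. j < K \<Longrightarrow> A *v iterates Psi v j \<noteq> v \<Longrightarrow>
      tau * d < norm (A *v iterates Psi vd j - vd)"
  shows "norm (iterates Psi vd (stop Psi vd d) - ustar) < e"
proof (cases "K \<le> stop Psi vd d")
  case True
  then show ?thesis
    using stop_index(2)[OF sol noise \<open>0 < d\<close> close(2)] close(1) by linarith
next
  case False
  let ?k = "stop Psi vd d"
  have "?k < K"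
    using False by simp
  \<comment> \<open>an early stop happens only at an exact iterate that already solves \<open>A u = v\<close>\<close>
  have "A *v iterates Psi v ?k = v"
  proof (rule ccontr)
    assume "A *v iterates Psi v ?k \<noteq> v"
    with early_disc[OF \<open>?k < K\<close>] stop_index(1)[OF sol noise \<open>0 < d\<close> close(2)]
    show False by linarith
  qed
  then have "iterates Psi v ?k = ustar"
    by (rule exact_iterate_eq_limit[OF lim])
  with early[OF \<open>?k < K\<close>] show ?thesis
    by (simp only:)
qed

lemma stopped_iterates_tendsto:
  fixes vdel :: "real \<Rightarrow> real^'m"
  assumes lim: "iterates Psi v \<longlonglongrightarrow> ustar" and sol: "A *v ustar = v"
    and noise: "\<forall>\<delta>>0. norm (vdel \<delta> - v) \<le> \<delta>"
    and Psi: "((\<lambda>\<delta>. Psi (vdel \<delta>)) \<longlongrightarrow> Psi v) (at_right 0)"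
  shows "((\<lambda>\<delta>. norm (iterates Psi (vdel \<delta>) (stop Psi (vdel \<delta>) \<delta>) - ustar)) \<longlongrightarrow> 0)
    (at_right 0)"
proof (rule tendstoI)
  fix e :: real
  assume "0 < e"
  let ?w = "iterates Psi v" and ?u = "\<lambda>\<delta>. iterates Psi (vdel \<delta>)"
  have vdel: "(vdel \<longlongrightarrow> v) (at_right 0)"
    using noise by (rule tendsto_at_right_0_if_norm_diff_le)
  have stable: "((\<lambda>\<delta>. ?u \<delta> k) \<longlongrightarrow> ?w k) (at_right 0)" for k
    using vdel Psi by (rule iterates_tendsto)
  define e' where "e' = min e wp / 2"
  have "0 < e'"
    using \<open>0 < e\<close> wp_pos by (simp add: e'_def)
  obtain K where K: "norm (?w K - ustar) < e'"
    using LIMSEQ_D[OF lim \<open>0 < e'\<close>] by blast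
  have near_K: "\<forall>\<^sub>F \<delta> in at_right 0. norm (?u \<delta> K - ?w K) < e'"
    using tendstoD[OF stable \<open>0 < e'\<close>] by (simp add: dist_norm)
  have early: "\<forall>\<^sub>F \<delta> in at_right 0. \<forall>j\<in>{..<K}. norm (?u \<delta> j - ?w j) < e"
    using tendstoD[OF stable \<open>0 < e\<close>] by (intro eventually_ball_finite) (auto simp: dist_norm)
  have early_disc: "\<forall>\<^sub>F \<delta> in at_right 0. \<forall>j\<in>{j. j < K \<and> A *v ?w j \<noteq> v}.
      tau * \<delta> < norm (A *v ?u \<delta> j - vdel \<delta>)"
    by (intro eventually_ball_finite ballI eventually_residual_gt_at_right_0[OF stable vdel]) auto
  have "\<forall>\<^sub>F \<delta> in at_right 0. norm (?u \<delta> (stop Psi (vdel \<delta>) \<delta>) - ustar) < e"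
    using eventually_at_right_less[of 0] near_K early early_disc
  proof eventually_elim
    case (elim \<delta>)
    have "norm (?u \<delta> K - ustar) < min e wp"
      using norm_diff_triangle_less[OF elim(2) K] by (simp add: e'_def)
    then have close: "norm (?u \<delta> K - ustar) < e" "norm (?u \<delta> K - ustar) \<le> wp"
      by simp_all
    have "norm (vdel \<delta> - v) \<le> \<delta>"
      using noise elim(1) by blast
    then show ?case
    proof (rule stopped_iterate_close[OF lim sol _ elim(1) close])
      show "norm (?u \<delta> j - ?w j) < e" if "j < K" for j
        using elim(3) that by simp
      show "tau * \<delta> < norm (A *v ?u \<delta> j - vdel \<delta>)" if "j < K" "A *v ?w j \<noteq> v" for j
        using elim(4) that by simp
    qed
  qed
  then show "\<forall>\<^sub>F \<delta> in at_right 0.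
      dist (norm (iterates Psi (vdel \<delta>) (stop Psi (vdel \<delta>) \<delta>) - ustar)) 0 < e"
    by simp
qed

end

theorem theorem3p13:
  fixes A :: "real^('p::finite \<times> 'q::finite)^'m::finite"
    and Psi :: "real^'m \<Rightarrow> real^('p \<times> 'q)"
    and udag :: "real^('p \<times> 'q)"
    and vdel :: "real \<Rightarrow> real^'m"
    and eth :: "('p \<times> 'q) \<Rightarrow> ('p \<times> 'q) \<Rightarrow> real"
    and R sig eta0 eta1 nu0 nu1 nu2 eta tau wp :: real
  assumes eth_nonneg: "\<forall>a b. 0 \<le> eth a b"
    and eth_zero: "\<forall>a b. eth a b = 0 \<longleftrightarrow> a = b"
    and eth_sym: "\<forall>a b. eth a b = eth b a"
    and eth_tri: "\<forall>a b c. eth a c \<le> eth a b + eth b c"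
    and R_pos: "R > 0" and sigma_pos: "sig > 0"
    and eta0_pos: "eta0 > 0" and eta1_pos: "eta1 > 0"
    and nu0_pos: "nu0 > 0" and nu1_pos: "nu1 > 0" and nu2_pos: "nu2 > 0"
    and eta_pos: "eta > 0"
    and eta_le0: "eta * (onorm (\<lambda>x. A *v x))^2 \<le> eta0"
    and eta_le1: "eta \<le> eta1"
    and tau_gt1: "tau > 1"
    and wp_pos: "wp > 0"
    and init_close: "norm (udag - Psi (A *v udag)) \<le> wp"
    and noise: "\<forall>delta > 0. norm (vdel delta - A *v udag) \<le> delta"
    and Psi_cont: "((\<lambda>delta. norm (Psi (vdel delta) - Psi (A *v udag))) \<longlongrightarrow> 0) (at_right 0)"
    and C_pos: "eta - eta1 / tau - nu0 * (wp + nu1) - eta0 * eta1 > 0"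
  shows "\<exists>u. A *v u = A *v udag \<and>
    ((\<lambda>delta. norm (irmgl A Psi eth R sig eta0 eta1 nu0 nu1 nu2 (vdel delta)
        (irmgl_stop A Psi eth R sig eta0 eta1 nu0 nu1 nu2 (vdel delta) tau delta) - u))
      \<longlongrightarrow> 0) (at_right 0)"
proof -
  interpret irmgl_method A eth R sig eta0 eta1 nu0 nu1 nu2 eta tau wp
    by unfold_locales (use assms in auto)
  obtain ustar where sol: "A *v ustar = A *v udag" and lim: "iterates Psi (A *v udag) \<longlonglongrightarrow> ustar"
    using exact_data_convergence[where Psi = Psi and udag = udag, OF init_close] by blast
  have "((\<lambda>\<delta>. Psi (vdel \<delta>)) \<longlongrightarrow> Psi (A *v udag)) (at_right 0)"
    using tendsto_norm_zero_cancel[OF Psi_cont] by (simp add: LIM_zero_iff)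
  then show ?thesis
    using stopped_iterates_tendsto[OF lim sol noise] sol by blast
qed

end
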